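(* Let $\Omega$ be a countable set, $G$ a closed subgroup of $S=\mathrm{Sym}(\Omega)$, and $(\Delta_i)_{i\in I}$ a family of subsets of $\Omega$. Then either (i) there exists a finite set $\Gamma\subseteq\Omega$ such that $G_{(\Gamma)}\le S_{\{\Delta_i\}}$ for all but finitely many $i\in I$, or (ii) there exists $g\in G$ such that $g\notin S_{\{\Delta_i\}}$ for infinitely many $i\in I$. Moreover, if all $\Delta_i$ are finite, then in (i) "all but finitely many" can be strengthened to "all".
   Context: $\mathrm{Sym}(\Omega)$ is the group of all permutations of $\Omega$ (acting on the right), with the function topology (pointwise convergence, $\Omega$ discrete); "closed" means closed in $S$. $G_{(\Gamma)}$ is the pointwise stabilizer of $\Gamma$ in $G$, and $S_{\{\Delta\}}=\{f\in S:\Delta f=\Delta\}$ is the setwise stabilizer. *)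

theory Defs
  imports "HOL-Analysis.Analysis" "HOL-Algebra.Bij"
begin

text \<open>Omega is the (countable) universe of the type 'a. Sym(Omega) = all bijections.\<close>
definition Sym :: "('a \<Rightarrow> 'a) set" where
  "Sym = {f. bij f}"

definition pointwise_top :: "('a \<Rightarrow> 'a) topology" where
  "pointwise_top = product_topology (\<lambda>_. discrete_topology UNIV) UNIV"

definition closed_subgroup_Sym :: "('a \<Rightarrow> 'a) set \<Rightarrow> bool" where
  "closed_subgroup_Sym G \<longleftrightarrow>
     subgroup G (BijGroup (UNIV :: 'a set)) \<and>
     closedin (subtopology pointwise_top Sym) G"

definition pstab :: "('a \<Rightarrow> 'a) set \<Rightarrow> 'a set \<Rightarrow> ('a \<Rightarrow> 'a) set" where
  "pstab G \<Gamma> = {g \<in> G. \<forall>x\<in>\<Gamma>. g x = x}"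

definition sstab :: "'a set \<Rightarrow> ('a \<Rightarrow> 'a) set" where
  "sstab \<Delta> = {f \<in> Sym. f ` \<Delta> = \<Delta>}"

end

theory Submission
  imports Defs
begin

text \<open>Suppose neither alternative holds. Since \<open>G\<^bsub>(\<Gamma>)\<^esub>\<close> moves infinitely many \<open>\<Delta>\<^sub>i\<close> while
  a given \<open>h \<in> G\<close> moves only finitely many, \<open>h\<close> composed with a suitable element of
  \<open>G\<^bsub>(\<Gamma>)\<^esub>\<close> agrees with \<open>h\<close> on \<open>\<Gamma>\<close> but moves some \<open>\<Delta>\<^sub>i\<close> that \<open>h\<close> stabilises. Iterating this
  with growing finite sets \<open>\<Gamma>\<^sub>n\<close> (which also contain a witness point for each newly moved set,
  and which enumerate \<open>\<Omega>\<close> back-and-forth) yields maps \<open>g\<^sub>n \<in> G\<close> converging pointwise to a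
  permutation \<open>g\<close>, which lies in \<open>G\<close> as \<open>G\<close> is closed. By the witnesses \<open>g\<close> moves every
  \<open>\<Delta>\<^bsub>j n\<^esub>\<close>, and the indices \<open>j n\<close> are distinct: for \<open>m < n\<close>, \<open>g\<^sub>n\<close> stabilises \<open>\<Delta>\<^bsub>j n\<^esub>\<close> but
  acts like \<open>g\<^sub>m\<^sub>+\<^sub>1\<close> on the witness that \<open>g\<^sub>m\<^sub>+\<^sub>1\<close> moves \<open>\<Delta>\<^bsub>j m\<^esub>\<close>. If all \<open>\<Delta>\<^sub>i\<close> are finite,
  the finitely many exceptional \<open>\<Delta>\<^sub>i\<close> are simply added to \<open>\<Gamma>\<close>.\<close>

lemma subgroup_BijGroup_UNIV_bij:
  assumes "subgroup G (BijGroup UNIV)" "g \<in> G"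
  shows "bij g"
  using subgroup.subset[OF assms(1)] assms(2) by (auto simp: BijGroup_def Bij_def)

lemma subgroup_BijGroup_UNIV_comp:
  assumes G: "subgroup G (BijGroup UNIV)" and "g \<in> G" "k \<in> G"
  shows "g \<circ> k \<in> G"
proof -
  have "g \<otimes>\<^bsub>BijGroup UNIV\<^esub> k \<in> G"
    using subgroup.m_closed[OF G] assms by blast
  moreover have "g \<in> Bij UNIV" "k \<in> Bij UNIV"
    using subgroup.subset[OF G] assms by (auto simp: BijGroup_def)
  ultimately show ?thesis
    by (simp add: BijGroup_def compose_def o_def restrict_def)
qed

lemma subgroup_BijGroup_UNIV_id:
  assumes "subgroup G (BijGroup UNIV)"
  shows "id \<in> G"
  using subgroup.one_closed[OF assms] by (simp add: BijGroup_def restrict_def id_def)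

lemma closedin_Sym_approximable_mem:
  assumes G: "closedin (subtopology pointwise_top Sym) G" and "bij g"
    and approx: "\<And>F. finite F \<Longrightarrow> \<exists>h\<in>G. \<forall>x\<in>F. h x = g x"
  shows "g \<in> G"
proof (rule ccontr)
  assume "g \<notin> G"
  have "openin (subtopology pointwise_top Sym) (Sym - G)"
    using G by (simp add: closedin_def pointwise_top_def)
  then obtain T where T: "openin pointwise_top T" "Sym - G = T \<inter> Sym"
    by (auto simp: openin_subtopology)
  have "g \<in> T"
    using T(2) \<open>g \<notin> G\<close> \<open>bij g\<close> by (auto simp: Sym_def)
  then obtain U where U: "finite {x. U x \<noteq> UNIV}" "g \<in> Pi\<^sub>E UNIV U" "Pi\<^sub>E UNIV U \<subseteq> T"
    using T(1) unfolding pointwise_top_def openin_product_topology_alt by force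
  obtain h where h: "h \<in> G" "\<forall>x\<in>{x. U x \<noteq> UNIV}. h x = g x"
    using approx[OF U(1)] by blast
  have "h \<in> Pi\<^sub>E UNIV U"
    using U(2) h(2) by (auto simp: PiE_def Pi_def) (metis UNIV_I)
  moreover have "h \<in> Sym"
    using closedin_subset[OF G] h(1) by (auto simp: topspace_subtopology)
  ultimately show False
    using T(2) U(3) h(1) by blast
qed

lemma bij_mem_sstab_iff:
  assumes "bij f"
  shows "f \<in> sstab D \<longleftrightarrow> (\<forall>x. f x \<in> D \<longleftrightarrow> x \<in> D)"
proof -
  have "f ` D = D \<longleftrightarrow> f -` D = D"
    using assms by (metis bij_is_inj bij_is_surj inj_vimage_image_eq surj_image_vimage_eq)
  then show ?thesis
    using assms by (auto simp: sstab_def Sym_def)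
qed

lemma pstab_subset_sstab:
  assumes "\<And>g. g \<in> G \<Longrightarrow> bij g" "D \<subseteq> \<Gamma>"
  shows "pstab G \<Gamma> \<subseteq> sstab D"
proof
  fix g assume g: "g \<in> pstab G \<Gamma>"
  then have "g ` D = D"
    using assms(2) by (force simp: pstab_def)
  then show "g \<in> sstab D"
    using g assms(1) by (simp add: pstab_def sstab_def Sym_def)
qed

lemma pstab_antimono: "\<Gamma> \<subseteq> \<Gamma>' \<Longrightarrow> pstab G \<Gamma>' \<subseteq> pstab G \<Gamma>"
  by (auto simp: pstab_def)

lemma finite_subset_incseq_UN:
  fixes \<Gamma> :: "nat \<Rightarrow> 'a set"
  assumes "finite F" "incseq \<Gamma>" "F \<subseteq> (\<Union>n. \<Gamma> n)"
  shows "\<exists>n. F \<subseteq> \<Gamma> n"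
  using assms(1,3)
proof (induction F rule: finite_induct)
  case (insert x F)
  then obtain m n where "F \<subseteq> \<Gamma> m" "x \<in> \<Gamma> n"
    by auto
  then have "insert x F \<subseteq> \<Gamma> (max m n)"
    using monoD[OF assms(2), of m "max m n"] monoD[OF assms(2), of n "max m n"] by auto
  then show ?case ..
qed simp

lemma coherent_seq_stable:
  assumes "incseq \<Gamma>" "\<And>n x. x \<in> \<Gamma> n \<Longrightarrow> f (Suc n) x = f n x"
    and "n \<le> m" "x \<in> \<Gamma> n"
  shows "f m x = f n x"
  using \<open>n \<le> m\<close>
proof (induction m rule: dec_induct)
  case (step m)
  have "x \<in> \<Gamma> m"
    using assms(1,4) step.hyps(1) by (auto simp: incseq_def)
  then show ?case
    using assms(2) step.IH by simp
qed simp

lemma coherent_seq_bij_limit: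
  fixes f :: "nat \<Rightarrow> 'a \<Rightarrow> 'b"
  assumes mono: "incseq \<Gamma>" and coherent: "\<And>n x. x \<in> \<Gamma> n \<Longrightarrow> f (Suc n) x = f n x"
    and inj: "\<And>n. inj (f n)"
    and covers_dom: "\<And>x. \<exists>n. x \<in> \<Gamma> n" and covers_ran: "\<And>y. \<exists>n. y \<in> f n ` \<Gamma> n"
  obtains g where "bij g" "\<And>n x. x \<in> \<Gamma> n \<Longrightarrow> g x = f n x"
proof -
  define g where "g x = f (SOME n. x \<in> \<Gamma> n) x" for x
  have g: "g x = f n x" if "x \<in> \<Gamma> n" for n x
  proof -
    define k where "k = (SOME n. x \<in> \<Gamma> n)"
    have "x \<in> \<Gamma> k"
      unfolding k_def using covers_dom by (rule someI_ex)
    then have "f (max k n) x = f k x" "f (max k n) x = f n x"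
      using coherent_seq_stable[of \<Gamma> f, OF mono coherent] that by auto
    then show ?thesis
      by (simp add: g_def k_def)
  qed
  have "inj g"
  proof (rule injI)
    fix x y assume "g x = g y"
    obtain m n where "x \<in> \<Gamma> m" "y \<in> \<Gamma> n"
      using covers_dom by blast
    then have "x \<in> \<Gamma> (max m n)" "y \<in> \<Gamma> (max m n)"
      using incseqD[OF mono, of m "max m n"] incseqD[OF mono, of n "max m n"] by auto
    then have "f (max m n) x = f (max m n) y"
      using \<open>g x = g y\<close> g by simp
    then show "x = y"
      using inj by (simp add: inj_eq)
  qed
  moreover have "surj g"
  proof -
    have "y \<in> range g" for y
    proof -
      obtain n x where "x \<in> \<Gamma> n" "y = f n x"
        using covers_ran[of y] by blast
      then show ?thesis
        using g by (metis rangeI)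
    qed
    then show ?thesis by blast
  qed
  ultimately show thesis
    using that g by (simp add: bij_def)
qed

lemma subgroup_BijGroup_UNIV_extension_step:
  assumes G: "subgroup G (BijGroup UNIV)" and "g \<in> G"
    and "infinite {i \<in> I. \<not> pstab G \<Gamma> \<subseteq> sstab (\<Delta> i)}"
    and "finite {i \<in> I. g \<notin> sstab (\<Delta> i)}"
  obtains g' i where "g' \<in> G" "\<forall>x\<in>\<Gamma>. g' x = g x"
    "i \<in> I" "g \<in> sstab (\<Delta> i)" "g' \<notin> sstab (\<Delta> i)"
proof -
  have "infinite ({i \<in> I. \<not> pstab G \<Gamma> \<subseteq> sstab (\<Delta> i)} - {i \<in> I. g \<notin> sstab (\<Delta> i)})"
    using assms(3,4) by (rule Diff_infinite_finite[rotated])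
  then obtain i where i: "i \<in> I" "\<not> pstab G \<Gamma> \<subseteq> sstab (\<Delta> i)" "g \<in> sstab (\<Delta> i)"
    using infinite_imp_nonempty by blast
  then obtain k where k: "k \<in> G" "\<forall>x\<in>\<Gamma>. k x = x" "k \<notin> sstab (\<Delta> i)"
    by (auto simp: pstab_def)
  have "bij g" "bij k" "bij (g \<circ> k)"
    using subgroup_BijGroup_UNIV_bij[OF G] subgroup_BijGroup_UNIV_comp[OF G] k(1) \<open>g \<in> G\<close>
    by auto
  then have "g \<circ> k \<notin> sstab (\<Delta> i)"
    using i(3) k(3) by (simp add: bij_mem_sstab_iff)
  moreover have "g \<circ> k \<in> G"
    using subgroup_BijGroup_UNIV_comp[OF G \<open>g \<in> G\<close> k(1)] .
  ultimately show thesis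
    using that[of "g \<circ> k" i] i k(2) by simp
qed

lemma subgroup_BijGroup_UNIV_moving_sequence:
  fixes G :: "('a::countable \<Rightarrow> 'a) set"
  assumes G: "subgroup G (BijGroup UNIV)"
    and no_fix: "\<And>\<Gamma>. finite \<Gamma> \<Longrightarrow> infinite {i \<in> I. \<not> pstab G \<Gamma> \<subseteq> sstab (\<Delta> i)}"
    and fin_moved: "\<And>g. g \<in> G \<Longrightarrow> finite {i \<in> I. g \<notin> sstab (\<Delta> i)}"
  obtains gs :: "nat \<Rightarrow> 'a \<Rightarrow> 'a" and \<Gamma>s :: "nat \<Rightarrow> 'a set" and j :: "nat \<Rightarrow> 'i"
  where "\<And>n. gs n \<in> G" "\<And>n. finite (\<Gamma>s n)" "\<And>n. \<Gamma>s n \<subseteq> \<Gamma>s (Suc n)"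
    "\<And>n x. x \<in> \<Gamma>s n \<Longrightarrow> gs (Suc n) x = gs n x"
    "\<And>n. from_nat n \<in> \<Gamma>s (Suc n)" "\<And>n. from_nat n \<in> gs (Suc n) ` \<Gamma>s (Suc n)"
    "\<And>n. j n \<in> I" "\<And>n. gs n \<in> sstab (\<Delta> (j n))"
    "\<And>n. \<exists>x\<in>\<Gamma>s (Suc n). (gs (Suc n) x \<in> \<Delta> (j n)) \<noteq> (x \<in> \<Delta> (j n))"
proof -
  define P where "P n st \<longleftrightarrow> fst st \<in> G \<and> finite (snd st)" for n :: nat and st :: "('a \<Rightarrow> 'a) \<times> 'a set"
  \<comment> \<open>Putting the n-th point and its preimage under the old map into the new domain is the
    back-and-forth bookkeeping that makes the limit a bijection; the recorded witness x keeps
    the set \<open>\<Delta> i\<close> moved in the limit.\<close>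
  define Q where "Q n st st' \<longleftrightarrow> snd st \<subseteq> snd st' \<and> (\<forall>x\<in>snd st. fst st' x = fst st x)
    \<and> from_nat n \<in> snd st' \<and> from_nat n \<in> fst st' ` snd st'
    \<and> (\<exists>i\<in>I. fst st \<in> sstab (\<Delta> i)
         \<and> (\<exists>x\<in>snd st'. (fst st' x \<in> \<Delta> i) \<noteq> (x \<in> \<Delta> i)))"
    for n st st'
  have "\<exists>st'. P (Suc n) st' \<and> Q n st st'" if "P n st" for n st
  proof -
    obtain g \<Gamma> where st: "st = (g, \<Gamma>)" "g \<in> G" "finite \<Gamma>"
      using \<open>P n st\<close> by (cases st) (simp add: P_def)
    define y where "y = inv_into UNIV g (from_nat n)"
    obtain g' i where g': "g' \<in> G" "\<forall>x\<in>\<Gamma> \<union> {from_nat n, y}. g' x = g x"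
      and i: "i \<in> I" "g \<in> sstab (\<Delta> i)" "g' \<notin> sstab (\<Delta> i)"
      using subgroup_BijGroup_UNIV_extension_step[OF G \<open>g \<in> G\<close> no_fix fin_moved]
        \<open>finite \<Gamma>\<close> \<open>g \<in> G\<close> by (metis finite_Un finite.insertI finite.emptyI)
    obtain x where x: "(g' x \<in> \<Delta> i) \<noteq> (x \<in> \<Delta> i)"
      using i(3) bij_mem_sstab_iff subgroup_BijGroup_UNIV_bij[OF G g'(1)] by blast
    have "g' y = from_nat n"
      using g'(2) subgroup_BijGroup_UNIV_bij[OF G \<open>g \<in> G\<close>]
      by (simp add: y_def bij_is_surj f_inv_into_f)
    then have "Q n st (g', \<Gamma> \<union> {from_nat n, y, x})"
      using g'(2) i x by (auto simp: Q_def st(1))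
    moreover have "P (Suc n) (g', \<Gamma> \<union> {from_nat n, y, x})"
      using g'(1) \<open>finite \<Gamma>\<close> by (simp add: P_def)
    ultimately show ?thesis by blast
  qed
  moreover have "P 0 (id, {})"
    using subgroup_BijGroup_UNIV_id[OF G] by (simp add: P_def)
  ultimately obtain s where s: "\<And>n. P n (s n)" "\<And>n. Q n (s n) (s (Suc n))"
    using dependent_nat_choice[of P Q] by blast
  obtain j where "\<forall>n. j n \<in> I \<and> fst (s n) \<in> sstab (\<Delta> (j n)) \<and>
      (\<exists>x\<in>snd (s (Suc n)). (fst (s (Suc n)) x \<in> \<Delta> (j n)) \<noteq> (x \<in> \<Delta> (j n)))"
    using s(2) unfolding Q_def by metis
  then show thesis
    using that[of "\<lambda>n. fst (s n)" "\<lambda>n. snd (s n)" j] s unfolding P_def Q_def by blast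
qed

lemma closed_subgroup_Sym_moves_infinitely_many:
  fixes G :: "('a::countable \<Rightarrow> 'a) set"
  assumes G: "closed_subgroup_Sym G"
    and no_fix: "\<And>\<Gamma>. finite \<Gamma> \<Longrightarrow> infinite {i \<in> I. \<not> pstab G \<Gamma> \<subseteq> sstab (\<Delta> i)}"
  shows "\<exists>g\<in>G. infinite {i \<in> I. g \<notin> sstab (\<Delta> i)}"
proof (rule ccontr)
  assume "\<not> ?thesis"
  then have fin_moved: "\<And>g. g \<in> G \<Longrightarrow> finite {i \<in> I. g \<notin> sstab (\<Delta> i)}"
    by blast
  have sub: "subgroup G (BijGroup UNIV)" and closed: "closedin (subtopology pointwise_top Sym) G"
    using G by (simp_all add: closed_subgroup_Sym_def)
  obtain gs \<Gamma>s j where gs: "\<And>n. gs n \<in> G" "\<And>n. finite (\<Gamma>s n)" "\<And>n. \<Gamma>s n \<subseteq> \<Gamma>s (Suc n)"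
      "\<And>n x. x \<in> \<Gamma>s n \<Longrightarrow> gs (Suc n) x = gs n x"
      "\<And>n. from_nat n \<in> \<Gamma>s (Suc n)" "\<And>n. from_nat n \<in> gs (Suc n) ` \<Gamma>s (Suc n)"
    and j: "\<And>n. j n \<in> I" "\<And>n. gs n \<in> sstab (\<Delta> (j n))"
      "\<And>n. \<exists>x\<in>\<Gamma>s (Suc n). (gs (Suc n) x \<in> \<Delta> (j n)) \<noteq> (x \<in> \<Delta> (j n))"
    using subgroup_BijGroup_UNIV_moving_sequence[OF sub no_fix fin_moved] by metis
  have mono: "incseq \<Gamma>s"
    using gs(3) by (rule incseq_SucI)
  have stable: "gs m x = gs n x" if "n \<le> m" "x \<in> \<Gamma>s n" for m n x
    using coherent_seq_stable[of \<Gamma>s gs, OF mono gs(4) that] .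
  have bij_gs: "bij (gs n)" for n
    using subgroup_BijGroup_UNIV_bij[OF sub gs(1)] .
  have dom: "\<exists>n. x \<in> \<Gamma>s n" for x
    using gs(5)[of "to_nat x"] by auto
  have ran: "\<exists>n. y \<in> gs n ` \<Gamma>s n" for y
    using gs(6)[of "to_nat y"] by auto
  obtain g where "bij g" and g: "\<And>n x. x \<in> \<Gamma>s n \<Longrightarrow> g x = gs n x"
    using coherent_seq_bij_limit[OF mono gs(4) bij_is_inj[OF bij_gs] dom ran] by blast
  have "g \<in> G"
  proof (rule closedin_Sym_approximable_mem[OF closed \<open>bij g\<close>])
    fix F :: "'a set" assume "finite F"
    moreover have "F \<subseteq> (\<Union>n. \<Gamma>s n)"
      using dom by blast
    ultimately obtain n where "F \<subseteq> \<Gamma>s n"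
      using finite_subset_incseq_UN[OF _ mono] by blast
    then have "\<forall>x\<in>F. gs n x = g x"
      using g by auto
    then show "\<exists>h\<in>G. \<forall>x\<in>F. h x = g x"
      using gs(1) by blast
  qed
  have moved: "g \<notin> sstab (\<Delta> (j n))" for n
  proof -
    obtain x where "x \<in> \<Gamma>s (Suc n)" "(gs (Suc n) x \<in> \<Delta> (j n)) \<noteq> (x \<in> \<Delta> (j n))"
      using j(3) by blast
    then have "(g x \<in> \<Delta> (j n)) \<noteq> (x \<in> \<Delta> (j n))"
      using g by simp
    then show ?thesis
      using bij_mem_sstab_iff[OF \<open>bij g\<close>] by blast
  qed
  have distinct: "j m \<noteq> j n" if "m < n" for m n
  proof
    assume "j m = j n"
    obtain x where x: "x \<in> \<Gamma>s (Suc m)" "(gs (Suc m) x \<in> \<Delta> (j m)) \<noteq> (x \<in> \<Delta> (j m))"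
      using j(3) by blast
    have "gs n x = gs (Suc m) x"
      using stable x(1) that by simp
    then have "(gs n x \<in> \<Delta> (j n)) \<noteq> (x \<in> \<Delta> (j n))"
      using x(2) \<open>j m = j n\<close> by simp
    then show False
      using j(2)[of n] bij_mem_sstab_iff[OF bij_gs] by blast
  qed
  have "inj j"
  proof (rule injI)
    fix m n assume "j m = j n"
    then show "m = n"
      using distinct[of m n] distinct[of n m] by (cases m n rule: linorder_cases) auto
  qed
  have "range j \<subseteq> {i \<in> I. g \<notin> sstab (\<Delta> i)}"
    using j(1) moved by blast
  then have "infinite {i \<in> I. g \<notin> sstab (\<Delta> i)}"
    using range_inj_infinite[OF \<open>inj j\<close>] by (rule infinite_super)
  then show False
    using fin_moved \<open>g \<in> G\<close> by blast
qed

lemma subgroup_BijGroup_UNIV_absorb_finite_exceptions: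
  assumes G: "subgroup G (BijGroup UNIV)" and "finite \<Gamma>"
    and "finite {i \<in> I. \<not> pstab G \<Gamma> \<subseteq> sstab (\<Delta> i)}" and "\<forall>i\<in>I. finite (\<Delta> i)"
  shows "\<exists>\<Gamma>'. finite \<Gamma>' \<and> (\<forall>i\<in>I. pstab G \<Gamma>' \<subseteq> sstab (\<Delta> i))"
proof (intro exI conjI ballI)
  define E where "E = {i \<in> I. \<not> pstab G \<Gamma> \<subseteq> sstab (\<Delta> i)}"
  let ?\<Gamma>' = "\<Gamma> \<union> (\<Union>i\<in>E. \<Delta> i)"
  show "finite ?\<Gamma>'"
    using assms(2-4) by (auto simp: E_def)
  fix i assume "i \<in> I"
  show "pstab G ?\<Gamma>' \<subseteq> sstab (\<Delta> i)"
  proof (cases "i \<in> E")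
    case True
    then show ?thesis
      using subgroup_BijGroup_UNIV_bij[OF G] by (intro pstab_subset_sstab) auto
  next
    case False
    then have "pstab G \<Gamma> \<subseteq> sstab (\<Delta> i)"
      using \<open>i \<in> I\<close> by (simp add: E_def)
    then show ?thesis
      using pstab_antimono[of \<Gamma> ?\<Gamma>' G] by blast
  qed
qed

theorem lemma11p2:
  fixes G :: "('a::countable \<Rightarrow> 'a) set"
    and I :: "'i set" and \<Delta> :: "'i \<Rightarrow> 'a set"
  assumes "closed_subgroup_Sym G"
  shows "((\<exists>\<Gamma>. finite \<Gamma> \<and> finite {i \<in> I. \<not> pstab G \<Gamma> \<subseteq> sstab (\<Delta> i)})
            \<or> (\<exists>g\<in>G. infinite {i \<in> I. g \<notin> sstab (\<Delta> i)}))
       \<and> ((\<forall>i\<in>I. finite (\<Delta> i)) \<longrightarrow>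
            ((\<exists>\<Gamma>. finite \<Gamma> \<and> (\<forall>i\<in>I. pstab G \<Gamma> \<subseteq> sstab (\<Delta> i)))
             \<or> (\<exists>g\<in>G. infinite {i \<in> I. g \<notin> sstab (\<Delta> i)})))"
proof -
  have G: "subgroup G (BijGroup UNIV)"
    using assms by (simp add: closed_subgroup_Sym_def)
  have "(\<exists>\<Gamma>. finite \<Gamma> \<and> finite {i \<in> I. \<not> pstab G \<Gamma> \<subseteq> sstab (\<Delta> i)})
      \<or> (\<exists>g\<in>G. infinite {i \<in> I. g \<notin> sstab (\<Delta> i)})"
    using closed_subgroup_Sym_moves_infinitely_many[OF assms] by blast
  then show ?thesis
    using subgroup_BijGroup_UNIV_absorb_finite_exceptions[OF G] by blast
qed

end
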